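(* Let $R$ be a commutative ring with identity, $M$ an $R$-module and $a\in R$. Then $$\bigcap_{b\in R} b\Gamma_b(M)\subseteq a\Gamma_a(M)\subseteq S_a(M)\subseteq S(M)\subseteq \beta(M)\subseteq \operatorname{Rad}(M).$$
   Context: For $b\in R$, $b\Gamma_{b}(M)=\{bm \mid m\in M,\ b^{k}m=0 \text{ for some } k\in\mathbb{Z}^{+}\}$. An $R$-module $N$ is $b$-reduced if $b^2n=0$ implies $bn=0$ for $n\in N$, and reduced if it is $b$-reduced for all $b\in R$. A proper submodule $N$ of $M$ is $a$-semiprime (resp. semiprime) if $M/N$ is $a$-reduced (resp. reduced). A proper submodule $N$ of $M$ is prime if for all $r\in R$, $m\in M$, $rm\in N$ implies $m\in N$ or $rM\subseteq N$. $S_a(M)$, $S(M)$, $\beta(M)$, $\operatorname{Rad}(M)$ denote respectively the intersections of all $a$-semiprime, all semiprime, all prime, and all maximal submodules of $M$ (the empty intersection being $M$). *)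

theory Defs
  imports "HOL.Modules"
begin

(* The R-module M is the whole type 'm, with scalar multiplication scale : R => M => M,
   where R is the commutative ring with identity 'r::comm_ring_1 and module scale holds. *)

definition bGamma :: "('r::comm_ring_1 \<Rightarrow> 'm::ab_group_add \<Rightarrow> 'm) \<Rightarrow> 'r \<Rightarrow> 'm set" where
  "bGamma scale b = {scale b m | m. \<exists>k::nat. k > 0 \<and> scale (b ^ k) m = 0}"

definition proper_submodule :: "('r::comm_ring_1 \<Rightarrow> 'm::ab_group_add \<Rightarrow> 'm) \<Rightarrow> 'm set \<Rightarrow> bool" where
  "proper_submodule scale N \<longleftrightarrow> module.subspace scale N \<and> N \<noteq> UNIV"

definition quotient_reduced_at :: "('r::comm_ring_1 \<Rightarrow> 'm::ab_group_add \<Rightarrow> 'm) \<Rightarrow> 'r \<Rightarrow> 'm set \<Rightarrow> bool" where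
  "quotient_reduced_at scale b N \<longleftrightarrow> (\<forall>m. scale (b ^ 2) m \<in> N \<longrightarrow> scale b m \<in> N)"

definition a_semiprime :: "('r::comm_ring_1 \<Rightarrow> 'm::ab_group_add \<Rightarrow> 'm) \<Rightarrow> 'r \<Rightarrow> 'm set \<Rightarrow> bool" where
  "a_semiprime scale a N \<longleftrightarrow> proper_submodule scale N \<and> quotient_reduced_at scale a N"

definition semiprime_submodule :: "('r::comm_ring_1 \<Rightarrow> 'm::ab_group_add \<Rightarrow> 'm) \<Rightarrow> 'm set \<Rightarrow> bool" where
  "semiprime_submodule scale N \<longleftrightarrow> proper_submodule scale N \<and> (\<forall>b. quotient_reduced_at scale b N)"

definition prime_submodule :: "('r::comm_ring_1 \<Rightarrow> 'm::ab_group_add \<Rightarrow> 'm) \<Rightarrow> 'm set \<Rightarrow> bool" where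
  "prime_submodule scale N \<longleftrightarrow> proper_submodule scale N \<and>
     (\<forall>r m. scale r m \<in> N \<longrightarrow> m \<in> N \<or> (\<forall>x. scale r x \<in> N))"

definition maximal_submodule :: "('r::comm_ring_1 \<Rightarrow> 'm::ab_group_add \<Rightarrow> 'm) \<Rightarrow> 'm set \<Rightarrow> bool" where
  "maximal_submodule scale N \<longleftrightarrow> proper_submodule scale N \<and>
     (\<forall>K. module.subspace scale K \<and> N \<subseteq> K \<longrightarrow> K = N \<or> K = UNIV)"

definition S_a :: "('r::comm_ring_1 \<Rightarrow> 'm::ab_group_add \<Rightarrow> 'm) \<Rightarrow> 'r \<Rightarrow> 'm set" where
  "S_a scale a = \<Inter> {N. a_semiprime scale a N}"

definition S_M :: "('r::comm_ring_1 \<Rightarrow> 'm::ab_group_add \<Rightarrow> 'm) \<Rightarrow> 'm set" where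
  "S_M scale = \<Inter> {N. semiprime_submodule scale N}"

definition beta_M :: "('r::comm_ring_1 \<Rightarrow> 'm::ab_group_add \<Rightarrow> 'm) \<Rightarrow> 'm set" where
  "beta_M scale = \<Inter> {N. prime_submodule scale N}"

definition Rad_M :: "('r::comm_ring_1 \<Rightarrow> 'm::ab_group_add \<Rightarrow> 'm) \<Rightarrow> 'm set" where
  "Rad_M scale = \<Inter> {N. maximal_submodule scale N}"

end

theory Submission
  imports Defs
begin

(* If a^k m = 0 then a^k m lies in every submodule N, and when M/N is a-reduced the
   exponent can be lowered one step at a time down to a m \<in> N.  A prime submodule N is
   semiprime because a^2 m = a (a m) \<in> N forces a m \<in> N or a M \<subseteq> N.  A maximal
   submodule N is prime: if r m \<in> N with m \<notin> N, then N + R m = M, so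
   r M \<subseteq> N + R (r m) \<subseteq> N. *)

context module
begin

lemma quotient_reduced_at_power:
  assumes "quotient_reduced_at scale a N" and "scale (a ^ Suc j) m \<in> N"
  shows "scale a m \<in> N"
  using assms(2)
proof (induction j)
  case 0
  then show ?case by simp
next
  case (Suc j)
  have "scale (a ^ 2) (scale (a ^ j) m) \<in> N"
    using Suc.prems by (simp add: power_add[symmetric] mult.commute)
  then have "scale a (scale (a ^ j) m) \<in> N"
    using assms(1) unfolding quotient_reduced_at_def by blast
  then have "scale (a ^ Suc j) m \<in> N"
    by (simp add: mult.commute)
  then show ?case by (rule Suc.IH)
qed

lemma bGamma_subset_if_quotient_reduced:
  assumes "subspace N" and "quotient_reduced_at scale a N"
  shows "bGamma scale a \<subseteq> N"
proof
  fix x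
  assume "x \<in> bGamma scale a"
  then obtain m j where x: "x = scale a m" and "scale (a ^ Suc j) m = 0"
    unfolding bGamma_def by (auto simp: gr0_conv_Suc)
  then have "scale (a ^ Suc j) m \<in> N"
    using subspace_0[OF assms(1)] by simp
  then show "x \<in> N"
    using quotient_reduced_at_power[OF assms(2)] x by blast
qed

lemma prime_submodule_imp_semiprime:
  assumes "prime_submodule scale N"
  shows "semiprime_submodule scale N"
  using assms unfolding prime_submodule_def semiprime_submodule_def quotient_reduced_at_def
  by (metis power2_eq_square scale_scale)

lemma maximal_submodule_imp_prime:
  assumes "maximal_submodule scale N"
  shows "prime_submodule scale N"
proof -
  have N: "subspace N"
    and maximal: "\<And>K. subspace K \<Longrightarrow> N \<subseteq> K \<Longrightarrow> K = N \<or> K = UNIV"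
    using assms unfolding maximal_submodule_def proper_submodule_def by auto
  have "scale r x \<in> N" if rm: "scale r m \<in> N" and "m \<notin> N" for r m x
  proof -
    have "N \<subseteq> span (insert m N)"
      by (meson span_superset subset_insertI subset_trans)
    moreover have "span (insert m N) \<noteq> N"
      using \<open>m \<notin> N\<close> span_superset by blast
    ultimately have "span (insert m N) = UNIV"
      using maximal by blast
    then obtain k where "x - scale k m \<in> N"
      by (auto simp: span_insert span_eq_iff[THEN iffD2, OF N])
    moreover have "scale r x = scale r (x - scale k m) + scale k (scale r m)"
      by (simp add: scale_right_diff_distrib mult.commute)
    ultimately show ?thesis
      using N rm by (metis subspace_add subspace_scale)
  qed
  then show ?thesis
    using assms unfolding prime_submodule_def maximal_submodule_def by blast
qed

end

theorem mainTheorem12: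
  fixes scale :: "'r::comm_ring_1 \<Rightarrow> 'm::ab_group_add \<Rightarrow> 'm" and a :: 'r
  assumes "module scale"
  shows "(\<Inter>b. bGamma scale b) \<subseteq> bGamma scale a
    \<and> bGamma scale a \<subseteq> S_a scale a
    \<and> S_a scale a \<subseteq> S_M scale
    \<and> S_M scale \<subseteq> beta_M scale
    \<and> beta_M scale \<subseteq> Rad_M scale"
proof (intro conjI)
  interpret module scale by (rule assms)
  show "(\<Inter>b. bGamma scale b) \<subseteq> bGamma scale a"
    by blast
  show "bGamma scale a \<subseteq> S_a scale a"
    unfolding S_a_def a_semiprime_def proper_submodule_def
    using bGamma_subset_if_quotient_reduced by blast
  show "S_a scale a \<subseteq> S_M scale"
    unfolding S_a_def S_M_def a_semiprime_def semiprime_submodule_def by blast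
  show "S_M scale \<subseteq> beta_M scale"
    unfolding S_M_def beta_M_def using prime_submodule_imp_semiprime by blast
  show "beta_M scale \<subseteq> Rad_M scale"
    unfolding beta_M_def Rad_M_def using maximal_submodule_imp_prime by blast
qed

end
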